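(* Let $\mathcal L>0$, $m_\pm>0$, $\rho_\pm>0$, $S_+<0<S_-$, $S_I\in\mathbb R$, $\lambda_\pm=\sqrt{\rho_\pm/m_\pm}$, and define \[ \mathcal H_1^{\rm p}(q_1,q_2)=\tfrac12\Big(-\tfrac{S_+}{\rho_+}m_+\lambda_+\tanh\big(\lambda_+\tfrac{q_2-q_1}{2}\big)-\tfrac{S_-}{\rho_-}m_-\lambda_-\tanh(\lambda_-q_1)-S_I\Big), \] \[ \mathcal H_2^{\rm p}(q_1,q_2)=\tfrac12\Big(\tfrac{S_+}{\rho_+}m_+\lambda_+\tanh\big(\lambda_+\tfrac{q_2-q_1}{2}\big)+\tfrac{S_-}{\rho_-}m_-\lambda_-\tanh(\lambda_-(\mathcal L-q_2))+S_I\Big). \] Then the ODE system $\dot q_1=\mathcal H_1^{\rm p}(q_1,q_2)$, $\dot q_2=\mathcal H_2^{\rm p}(q_1,q_2)$ is the gradient flow of the function \[ \mathcal E(q_1,q_2)=\frac{\frac{S_-}{\rho_-}m_-}{2}\ln\cosh(\lambda_-q_1)+\frac{\frac{S_-}{\rho_-}m_-}{2}\ln\cosh(\lambda_-(\mathcal L-q_2))-\frac{S_+}{\rho_+}m_+\ln\cosh\Big(\lambda_+\frac{q_2-q_1}{2}\Big)+\frac12S_I(q_1-q_2), \] i.e. $(\mathcal H_1^{\rm p},\mathcal H_2^{\rm p})=-\nabla\mathcal E$, and $\mathcal E$ is a strictly convex Lyapunov function for the system. *)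

theory Defs
  imports "HOL-Analysis.Analysis"
begin

definition strict_convex_on :: "'a::real_vector set \<Rightarrow> ('a \<Rightarrow> real) \<Rightarrow> bool"
  where "strict_convex_on S f \<longleftrightarrow> convex S \<and>
    (\<forall>x\<in>S. \<forall>y\<in>S. x \<noteq> y \<longrightarrow> (\<forall>u>0. \<forall>v>0. u + v = 1 \<longrightarrow>
        f (u *\<^sub>R x + v *\<^sub>R y) < u * f x + v * f y))"

definition lam :: "real \<Rightarrow> real \<Rightarrow> real" where
  "lam rho m = sqrt (rho / m)"

definition H1p :: "real \<Rightarrow> real \<Rightarrow> real \<Rightarrow> real \<Rightarrow> real \<Rightarrow> real \<Rightarrow> real \<Rightarrow> real \<Rightarrow> real \<Rightarrow> real \<Rightarrow> real"
  where "H1p L mp mm rhop rhom Sp Sm SI q1 q2 =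
    (1/2) * ( - (Sp / rhop) * mp * lam rhop mp * tanh (lam rhop mp * ((q2 - q1) / 2))
              - (Sm / rhom) * mm * lam rhom mm * tanh (lam rhom mm * q1)
              - SI)"

definition H2p :: "real \<Rightarrow> real \<Rightarrow> real \<Rightarrow> real \<Rightarrow> real \<Rightarrow> real \<Rightarrow> real \<Rightarrow> real \<Rightarrow> real \<Rightarrow> real \<Rightarrow> real"
  where "H2p L mp mm rhop rhom Sp Sm SI q1 q2 =
    (1/2) * ( (Sp / rhop) * mp * lam rhop mp * tanh (lam rhop mp * ((q2 - q1) / 2))
              + (Sm / rhom) * mm * lam rhom mm * tanh (lam rhom mm * (L - q2))
              + SI)"

definition Efun :: "real \<Rightarrow> real \<Rightarrow> real \<Rightarrow> real \<Rightarrow> real \<Rightarrow> real \<Rightarrow> real \<Rightarrow> real \<Rightarrow> real \<times> real \<Rightarrow> real"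
  where "Efun L mp mm rhop rhom Sp Sm SI q =
    ((Sm / rhom) * mm / 2) * ln (cosh (lam rhom mm * fst q))
    + ((Sm / rhom) * mm / 2) * ln (cosh (lam rhom mm * (L - snd q)))
    - (Sp / rhop) * mp * ln (cosh (lam rhop mp * ((snd q - fst q) / 2)))
    + (1/2) * SI * (fst q - snd q)"

end

theory Submission
  imports Defs
begin

(* Since S_+ < 0 < S_-, the energy is a positive combination of ln cosh composed with affine maps,
   plus a linear term. ln cosh is strictly convex because its derivative tanh is strictly
   increasing; the terms in q1 and in L - q2 alone already separate points of the plane, and the
   coupling term in q2 - q1 is convex, so the sum is strictly convex. Along a solution of
   q' = -grad E one has (E o q)' = -|grad E|^2 <= 0. *)

lemma strict_convex_on_imp_convex_on:
  assumes "strict_convex_on S f"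
  shows "convex_on S f"
  unfolding convex_on_def
proof (intro conjI ballI allI impI)
  show "convex S"
    using assms by (simp add: strict_convex_on_def)
  fix x y and u v :: real
  assume xy: "x \<in> S" "y \<in> S" and uv: "0 \<le> u" "0 \<le> v" "u + v = 1"
  show "f (u *\<^sub>R x + v *\<^sub>R y) \<le> u * f x + v * f y"
  proof (cases "x = y \<or> u = 0 \<or> v = 0")
    case True
    with uv show ?thesis
      by (auto simp flip: scaleR_left_distrib distrib_right)
  next
    case False
    with assms xy uv show ?thesis
      by (simp add: strict_convex_on_def less_imp_le)
  qed
qed

lemma strict_convex_on_linorderI:
  fixes f :: "real \<Rightarrow> real"
  assumes "convex A"
    and "\<And>t x y. 0 < t \<Longrightarrow> t < 1 \<Longrightarrow> x \<in> A \<Longrightarrow> y \<in> A \<Longrightarrow> x < y \<Longrightarrow>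
      f ((1 - t) * x + t * y) < (1 - t) * f x + t * f y"
  shows "strict_convex_on A f"
  unfolding strict_convex_on_def
proof (intro conjI ballI allI impI)
  fix x y u v :: real
  assume "x \<in> A" "y \<in> A" "x \<noteq> y" "0 < u" "0 < v" "u + v = 1"
  then consider "x < y" "u = 1 - v" | "y < x" "v = 1 - u"
    by linarith
  then show "f (u *\<^sub>R x + v *\<^sub>R y) < u * f x + v * f y"
    by cases (use assms \<open>x \<in> A\<close> \<open>y \<in> A\<close> \<open>0 < u\<close> \<open>0 < v\<close> in \<open>auto simp: add.commute\<close>)
qed (fact assms(1))

lemma strict_convex_on_realI:
  assumes "connected A"
    and deriv: "\<And>x. x \<in> A \<Longrightarrow> (f has_real_derivative f' x) (at x)"
    and mono: "strict_mono_on A f'"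
  shows "strict_convex_on A f"
proof (rule strict_convex_on_linorderI)
  show "convex A"
    using \<open>connected A\<close> by (simp add: connected_convex_1)
  fix t x y :: real
  assume t: "0 < t" "t < 1" and xy: "x \<in> A" "y \<in> A" "x < y"
  define z where "z = (1 - t) * x + t * y"
  have zx: "z - x = t * (y - x)" and yz: "y - z = (1 - t) * (y - x)"
    by (simp_all add: z_def algebra_simps)
  have "0 < z - x" "0 < y - z"
    unfolding zx yz using t xy by simp_all
  then have "x < z" "z < y"
    by simp_all
  have "{x..y} \<subseteq> A"
    using \<open>connected A\<close> xy connected_contains_Icc by blast
  then have derivs: "(f has_real_derivative f' w) (at w)" if "x \<le> w" "w \<le> y" for w
    using deriv that by auto
  have "\<exists>\<xi>. x < \<xi> \<and> \<xi> < z \<and> f z - f x = (z - x) * f' \<xi>"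
    using \<open>z < y\<close> by (intro MVT2 [OF \<open>x < z\<close>] derivs) auto
  then obtain \<xi> where \<xi>: "x < \<xi>" "\<xi> < z" "f z - f x = (z - x) * f' \<xi>"
    by blast
  have "\<exists>\<eta>. z < \<eta> \<and> \<eta> < y \<and> f y - f z = (y - z) * f' \<eta>"
    using \<open>x < z\<close> by (intro MVT2 [OF \<open>z < y\<close>] derivs) auto
  then obtain \<eta> where \<eta>: "z < \<eta>" "\<eta> < y" "f y - f z = (y - z) * f' \<eta>"
    by blast
  have "f' \<xi> < f' \<eta>"
    using \<xi> \<eta> \<open>{x..y} \<subseteq> A\<close> by (intro strict_mono_onD [OF mono]) auto
  have "(1 - t) * f x + t * f y - f z = t * (f y - f z) - (1 - t) * (f z - f x)"
    by (simp add: algebra_simps)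
  also have "\<dots> = t * ((y - z) * f' \<eta>) - (1 - t) * ((z - x) * f' \<xi>)"
    by (simp only: \<xi>(3) \<eta>(3))
  also have "\<dots> = t * (1 - t) * (y - x) * (f' \<eta> - f' \<xi>)"
    unfolding zx yz by (simp add: algebra_simps)
  also have "\<dots> > 0"
    using t xy \<open>f' \<xi> < f' \<eta>\<close> by simp
  finally show "f ((1 - t) * x + t * y) < (1 - t) * f x + t * f y"
    by (simp add: z_def)
qed

lemma strict_convex_on_cmul:
  fixes c :: real
  assumes "0 < c" and "strict_convex_on S f"
  shows "strict_convex_on S (\<lambda>x. c * f x)"
  unfolding strict_convex_on_def
proof (intro conjI ballI allI impI)
  show "convex S"
    using assms(2) by (simp add: strict_convex_on_def)
  fix x y and u v :: real
  assume "x \<in> S" "y \<in> S" "x \<noteq> y" "0 < u" "0 < v" "u + v = 1"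
  with assms have "c * f (u *\<^sub>R x + v *\<^sub>R y) < c * (u * f x + v * f y)"
    by (simp add: strict_convex_on_def)
  then show "c * f (u *\<^sub>R x + v *\<^sub>R y) < u * (c * f x) + v * (c * f y)"
    by (simp add: algebra_simps)
qed

lemma convex_on_linear:
  fixes l :: "'a::real_vector \<Rightarrow> real"
  assumes "linear l" and "convex S"
  shows "convex_on S l"
  using assms by (simp add: convex_on_def linear_add linear_scale)

lemma affine_combination_linear:
  assumes "linear l" and "u + v = 1"
  shows "l (u *\<^sub>R x + v *\<^sub>R y) + b = u *\<^sub>R (l x + b) + v *\<^sub>R (l y + b)"
  using assms by (simp add: linear_add linear_scale algebra_simps flip: scaleR_left_distrib)

lemma convex_on_compose_affine:
  assumes "convex_on UNIV f" and "linear l"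
  shows "convex_on UNIV (\<lambda>x. f (l x + b))"
  using assms by (simp add: convex_on_def affine_combination_linear)

lemma strict_convex_on_compose_affine:
  assumes "strict_convex_on UNIV f" and "linear l" and "inj l"
  shows "strict_convex_on UNIV (\<lambda>x. f (l x + b))"
  using assms by (simp add: strict_convex_on_def affine_combination_linear inj_eq)

lemma strict_convex_on_separable_add:
  assumes f: "strict_convex_on S f" and g: "strict_convex_on T g" and h: "convex_on (S \<times> T) h"
  shows "strict_convex_on (S \<times> T) (\<lambda>q. f (fst q) + g (snd q) + h q)"
  unfolding strict_convex_on_def
proof (intro conjI ballI allI impI)
  show "convex (S \<times> T)"
    using h by (rule convex_on_imp_convex)
  fix x y :: "'a \<times> 'b" and u v :: real
  assume xy: "x \<in> S \<times> T" "y \<in> S \<times> T" "x \<noteq> y" and uv: "0 < u" "0 < v" "u + v = 1"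
  have f_le: "f (u *\<^sub>R fst x + v *\<^sub>R fst y) \<le> u * f (fst x) + v * f (fst y)"
    using strict_convex_on_imp_convex_on [OF f] xy uv by (simp add: convex_on_def mem_Times_iff)
  have g_le: "g (u *\<^sub>R snd x + v *\<^sub>R snd y) \<le> u * g (snd x) + v * g (snd y)"
    using strict_convex_on_imp_convex_on [OF g] xy uv by (simp add: convex_on_def mem_Times_iff)
  have h_le: "h (u *\<^sub>R x + v *\<^sub>R y) \<le> u * h x + v * h y"
    using h xy uv unfolding convex_on_def by (blast intro: less_imp_le)
  have "fst x \<noteq> fst y \<or> snd x \<noteq> snd y"
    using \<open>x \<noteq> y\<close> by (simp add: prod_eq_iff)
  then have "f (u *\<^sub>R fst x + v *\<^sub>R fst y) < u * f (fst x) + v * f (fst y) \<or>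
      g (u *\<^sub>R snd x + v *\<^sub>R snd y) < u * g (snd x) + v * g (snd y)"
    using f g xy uv by (auto simp: strict_convex_on_def mem_Times_iff)
  with f_le g_le h_le show "f (fst (u *\<^sub>R x + v *\<^sub>R y)) + g (snd (u *\<^sub>R x + v *\<^sub>R y)) + h (u *\<^sub>R x + v *\<^sub>R y)
      < u * (f (fst x) + g (snd x) + h x) + v * (f (fst y) + g (snd y) + h y)"
    by (simp add: distrib_left) linarith
qed

lemma has_real_derivative_ln_cosh: "((\<lambda>x::real. ln (cosh x)) has_real_derivative tanh x) (at x)"
  by (auto intro!: derivative_eq_intros simp: cosh_real_pos tanh_def)

lemma has_derivative_ln_cosh:
  fixes f :: "'a::real_normed_vector \<Rightarrow> real"
  assumes "(f has_derivative f') (at x within S)"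
  shows "((\<lambda>x. ln (cosh (f x))) has_derivative (\<lambda>h. tanh (f x) * f' h)) (at x within S)"
  using has_derivative_compose [OF assms has_real_derivative_ln_cosh [unfolded has_field_derivative_def]]
  by (simp add: mult.commute)

lemma strict_convex_on_ln_cosh: "strict_convex_on UNIV (\<lambda>x::real. ln (cosh x))"
  using has_real_derivative_ln_cosh tanh_real_strict_mono
  by (intro strict_convex_on_realI) (auto simp: strict_mono_on_def strict_mono_def)

lemma gradient_flow_nonincreasing:
  fixes E :: "'a::real_inner \<Rightarrow> real"
  assumes grad: "\<And>p. (E has_derivative (\<lambda>h. - (G p \<bullet> h))) (at p)"
    and T: "is_interval T"
    and flow: "\<forall>t\<in>T. (q has_vector_derivative G (q t)) (at t within T)"
    and "s \<in> T" "t \<in> T" "s \<le> t"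
  shows "E (q t) \<le> E (q s)"
proof -
  have "{s..t} \<subseteq> T"
    using T \<open>s \<in> T\<close> \<open>t \<in> T\<close> by (meson atLeastAtMost_iff is_interval_1 subsetI)
  have deriv: "((\<lambda>r. E (q r)) has_derivative (\<lambda>h. - (G (q r) \<bullet> (h *\<^sub>R G (q r))))) (at r within {s..t})"
    if "s \<le> r" "r \<le> t" for r
  proof -
    have "(q has_derivative (\<lambda>h. h *\<^sub>R G (q r))) (at r within {s..t})"
      using flow \<open>{s..t} \<subseteq> T\<close> that has_derivative_subset
      unfolding has_vector_derivative_def by fastforce
    then show ?thesis
      using has_derivative_compose grad by blast
  qed
  then obtain r where "E (q t) - E (q s) = - (G (q r) \<bullet> ((t - s) *\<^sub>R G (q r)))"
    using mvt_very_simple [OF \<open>s \<le> t\<close> deriv] by blast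
  also have "\<dots> = - ((t - s) * (G (q r) \<bullet> G (q r)))"
    by simp
  also have "\<dots> \<le> 0"
    using \<open>s \<le> t\<close> by simp
  finally show ?thesis
    by simp
qed

lemma has_derivative_Efun:
  "(Efun L mp mm rhop rhom Sp Sm SI has_derivative
      (\<lambda>h. - ((H1p L mp mm rhop rhom Sp Sm SI q1 q2, H2p L mp mm rhop rhom Sp Sm SI q1 q2) \<bullet> h)))
    (at (q1, q2))"
  unfolding Efun_def [abs_def]
  by (rule has_derivative_eq_rhs, (rule has_derivative_ln_cosh derivative_intros | simp)+)
    (simp add: fun_eq_iff H1p_def H2p_def inner_prod_def algebra_simps diff_divide_distrib)

lemma strict_convex_on_Efun:
  assumes "mp > 0" "mm > 0" "rhop > 0" "rhom > 0" "Sp < 0" "0 < Sm"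
  shows "strict_convex_on UNIV (Efun L mp mm rhop rhom Sp Sm SI)"
proof -
  define lm lp where "lm = lam rhom mm" and "lp = lam rhop mp"
  define A B where "A = Sm / rhom * mm / 2" and "B = - (Sp / rhop * mp)"
  have "lm > 0" "A > 0" "B > 0"
    using assms by (simp_all add: lm_def lam_def A_def B_def divide_neg_pos mult_neg_pos)
  have linear_mult_const: "linear (\<lambda>x::real. c * x)" for c
    by (simp add: linear_iff algebra_simps)
  have inj_mult_const: "c \<noteq> 0 \<Longrightarrow> inj (\<lambda>x::real. c * x)" for c
    by (simp add: inj_def)
  define F G where "F x = A * ln (cosh (lm * x + 0))" and "G y = A * ln (cosh ((- lm) * y + lm * L))"
    for x y :: real
  define h where "h q = B * ln (cosh (lp * ((snd q - fst q) / 2) + 0)) + 1 / 2 * SI * (fst q - snd q)"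
    for q :: "real \<times> real"
  have "strict_convex_on UNIV F" "strict_convex_on UNIV G"
    unfolding F_def G_def using \<open>lm > 0\<close> \<open>A > 0\<close>
    by (intro strict_convex_on_cmul strict_convex_on_compose_affine strict_convex_on_ln_cosh
        linear_mult_const inj_mult_const; simp)+
  moreover have "convex_on UNIV h"
    unfolding h_def
  proof (rule convex_on_add)
    have "convex_on UNIV (\<lambda>q::real \<times> real. ln (cosh (lp * ((snd q - fst q) / 2) + 0)))"
      using strict_convex_on_imp_convex_on [OF strict_convex_on_ln_cosh]
      by (rule convex_on_compose_affine) (simp add: linear_iff field_simps)
    then show "convex_on UNIV (\<lambda>q. B * ln (cosh (lp * ((snd q - fst q) / 2) + 0)))"
      using \<open>B > 0\<close> by (simp add: convex_on_cmul)
    show "convex_on UNIV (\<lambda>q::real \<times> real. 1 / 2 * SI * (fst q - snd q))"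
      by (rule convex_on_linear) (auto simp: linear_iff field_simps)
  qed
  ultimately have "strict_convex_on UNIV (\<lambda>q. F (fst q) + G (snd q) + h q)"
    using strict_convex_on_separable_add [of UNIV F UNIV G h] by simp
  moreover have "Efun L mp mm rhop rhom Sp Sm SI = (\<lambda>q. F (fst q) + G (snd q) + h q)"
    by (simp add: fun_eq_iff Efun_def F_def G_def h_def lm_def lp_def A_def B_def algebra_simps)
  ultimately show ?thesis
    by simp
qed

theorem proposition4p2:
  fixes L mp mm rhop rhom Sp Sm SI :: real
  assumes "L > 0" "mp > 0" "mm > 0" "rhop > 0" "rhom > 0" "Sp < 0" "0 < Sm"
  shows
    \<comment> \<open>gradient flow: (H1p, H2p) = - grad E\<close>
    "(\<forall>q1 q2. (Efun L mp mm rhop rhom Sp Sm SI has_derivative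
        (\<lambda>h. - ((H1p L mp mm rhop rhom Sp Sm SI q1 q2, H2p L mp mm rhop rhom Sp Sm SI q1 q2) \<bullet> h)))
        (at (q1, q2)))
     \<and> strict_convex_on UNIV (Efun L mp mm rhop rhom Sp Sm SI)
     \<and> (\<forall>(T::real set) (q::real \<Rightarrow> real \<times> real). is_interval T \<longrightarrow>
          (\<forall>t\<in>T. (q has_vector_derivative
              (H1p L mp mm rhop rhom Sp Sm SI (fst (q t)) (snd (q t)),
               H2p L mp mm rhop rhom Sp Sm SI (fst (q t)) (snd (q t)))) (at t within T)) \<longrightarrow>
          (\<forall>s\<in>T. \<forall>t\<in>T. s \<le> t \<longrightarrow>
              Efun L mp mm rhop rhom Sp Sm SI (q t) \<le> Efun L mp mm rhop rhom Sp Sm SI (q s)))"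
proof -
  define G where "G p = (H1p L mp mm rhop rhom Sp Sm SI (fst p) (snd p),
    H2p L mp mm rhop rhom Sp Sm SI (fst p) (snd p))" for p
  have grad: "(Efun L mp mm rhop rhom Sp Sm SI has_derivative (\<lambda>h. - (G p \<bullet> h))) (at p)" for p
    using has_derivative_Efun [of L mp mm rhop rhom Sp Sm SI "fst p" "snd p"] by (simp add: G_def)
  show ?thesis
    using has_derivative_Efun strict_convex_on_Efun [OF assms(2-)]
      gradient_flow_nonincreasing [OF grad] by (simp add: G_def)
qed

end
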